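(* Fix $\Delta>0$. Suppose that to every $S\in V$ there is assigned a pair $(\mathrm{low}(S),\mathrm{sol}(S))\in\mathbb{R}\times\mathbb{R}^d$ (the output of the subroutine $\mathtt{SubtreeSolver}(S)$) such that $\|\mathrm{sol}(S)\|_0\le k$ for all $S\in V$ and (i) $\mathrm{low}(S)\le F(S)$ for every $S\in V$; (ii) there exists $S\in V^*$ with $P(\mathrm{sol}(S))\le \mathrm{low}(S)+\Delta$. Consider the following best-first search procedure. Initialize a min-priority queue containing only $\emptyset$ with key $\mathrm{low}(\emptyset)$; set $x_{\min}\leftarrow \mathrm{sol}(\emptyset)$ and $P_{\min}\leftarrow P(x_{\min})$. While the queue is nonempty: pop a node $S$ of smallest key (ties broken arbitrarily); if $P(\mathrm{sol}(S))\le \mathrm{low}(S)+\Delta$, return $\mathrm{sol}(S)$ and stop; otherwise, for each child $T$ of $S$ in $G$ (i.e., each $T$ with $(S,T)\in E$): if $\mathrm{low}(T)>P_{\min}$, the node $T$ may either be discarded (pruned) or processed as follows, and if $\mathrm{low}(T)\le P_{\min}$ it must be processed as follows: push $T$ with key $\mathrm{low}(T)$, and if $P(\mathrm{sol}(T))<P_{\min}$ set $x_{\min}\leftarrow\mathrm{sol}(T)$ and $P_{\min}\leftarrow P(x_{\min})$. Then this procedure always halts at the return step, and the returned vector $x$ satisfies $\|x\|_0\le k$ and $P(x)\le P(x^* )+\Delta$.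
   Context: Let $d,k$ be positive integers with $k\le d$, and let $[d]=\{1,\dots,d\}$ with its usual order. For nonempty $S\subseteq[d]$, $\max S$ is its largest element; set $\max\emptyset=0$. For $x\in\mathbb{R}^d$, $\mathrm{supp}(x)=\{i: x_i\neq 0\}$ and $\|x\|_0=|\mathrm{supp}(x)|$. The state-space tree $G=(V,E)$ is defined by $V=\{S\subseteq[d]: |S|\le k \text{ and } k-|S|\le d-\max S\}$, with a directed edge $(S,T)\in E$ for $S,T\in V$ iff $T\neq\emptyset$ and $S=T\setminus\{\max T\}$ (then $T$ is a child of $S$). For $S\in V$, $\mathrm{desc}(S)\subseteq V$ denotes the set consisting of $S$ and all its descendants in $G$, and $U(S)=\{x\in\mathbb{R}^d: \mathrm{supp}(x)\subseteq S' \text{ for some } S'\in\mathrm{desc}(S)\}$. Let $P:\mathbb{R}^d\to\mathbb{R}$ be a function and let $x^*$ be an optimal solution of $\min\{P(x): \|x\|_0\le k\}$ (assumed to exist). Define $F(S)=\inf\{P(x): x\in U(S)\}$ for $S\in V$, and $V^*=\{S\in V: x^*\in U(S)\}$. *)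

theory Defs
  imports Main "HOL-Library.Multiset" "HOL-Library.Extended_Real"
begin

text \<open>Vectors of R^d are represented as functions nat => real vanishing outside {1..d}.\<close>

definition Rd :: "nat \<Rightarrow> (nat \<Rightarrow> real) set" where
  "Rd d = {x. \<forall>i. i \<notin> {1..d} \<longrightarrow> x i = 0}"

definition supp :: "(nat \<Rightarrow> real) \<Rightarrow> nat set" where
  "supp x = {i. x i \<noteq> 0}"

definition norm0 :: "(nat \<Rightarrow> real) \<Rightarrow> nat" where
  "norm0 x = card (supp x)"

definition max0 :: "nat set \<Rightarrow> nat" where
  "max0 S = (if S = {} then 0 else Max S)"

definition Vset :: "nat \<Rightarrow> nat \<Rightarrow> nat set set" where
  "Vset d k = {S. S \<subseteq> {1..d} \<and> card S \<le> k \<and> k - card S \<le> d - max0 S}"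

definition Eset :: "nat \<Rightarrow> nat \<Rightarrow> (nat set \<times> nat set) set" where
  "Eset d k = {(S, T). S \<in> Vset d k \<and> T \<in> Vset d k \<and> T \<noteq> {} \<and> S = T - {Max T}}"

definition children :: "nat \<Rightarrow> nat \<Rightarrow> nat set \<Rightarrow> nat set set" where
  "children d k S = {T. (S, T) \<in> Eset d k}"

definition desc :: "nat \<Rightarrow> nat \<Rightarrow> nat set \<Rightarrow> nat set set" where
  "desc d k S = {T. (S, T) \<in> (Eset d k)\<^sup>*}"

definition Uset :: "nat \<Rightarrow> nat \<Rightarrow> nat set \<Rightarrow> (nat \<Rightarrow> real) set" where
  "Uset d k S = {x \<in> Rd d. \<exists>S' \<in> desc d k S. supp x \<subseteq> S'}"

text \<open>F(S) as an infimum in the extended reals (it may be -infinity).\<close>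
definition Fval :: "nat \<Rightarrow> nat \<Rightarrow> ((nat \<Rightarrow> real) \<Rightarrow> real) \<Rightarrow> nat set \<Rightarrow> ereal" where
  "Fval d k P S = (INF x \<in> Uset d k S. ereal (P x))"

definition Vstar :: "nat \<Rightarrow> nat \<Rightarrow> (nat \<Rightarrow> real) \<Rightarrow> nat set set" where
  "Vstar d k xs = {S \<in> Vset d k. xs \<in> Uset d k S}"

text \<open>Processing the children list (in arbitrary order) of a popped node:
  each child is either pruned (allowed only if low T > P_min) or pushed,
  updating the incumbent x_min (P_min = P x_min).\<close>
inductive proc_children ::
  "((nat \<Rightarrow> real) \<Rightarrow> real) \<Rightarrow> (nat set \<Rightarrow> real) \<Rightarrow> (nat set \<Rightarrow> (nat \<Rightarrow> real))
   \<Rightarrow> nat set list \<Rightarrow> nat set multiset \<Rightarrow> (nat \<Rightarrow> real) \<Rightarrow> nat set multiset \<Rightarrow> (nat \<Rightarrow> real) \<Rightarrow> bool"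
  for P low sol where
  pc_nil: "proc_children P low sol [] Q xm Q xm"
| pc_prune: "low T > P xm \<Longrightarrow> proc_children P low sol ts Q xm Q' xm'
             \<Longrightarrow> proc_children P low sol (T # ts) Q xm Q' xm'"
| pc_push: "proc_children P low sol ts (add_mset T Q) (if P (sol T) < P xm then sol T else xm) Q' xm'
             \<Longrightarrow> proc_children P low sol (T # ts) Q xm Q' xm'"

datatype bfs_state = Running "nat set multiset" "nat \<Rightarrow> real" | Returned "nat \<Rightarrow> real"

inductive bfs_step ::
  "nat \<Rightarrow> nat \<Rightarrow> ((nat \<Rightarrow> real) \<Rightarrow> real) \<Rightarrow> (nat set \<Rightarrow> real) \<Rightarrow> (nat set \<Rightarrow> (nat \<Rightarrow> real))
   \<Rightarrow> real \<Rightarrow> bfs_state \<Rightarrow> bfs_state \<Rightarrow> bool"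
  for d k P low sol \<Delta> where
  bfs_return: "S \<in># Q \<Longrightarrow> (\<forall>T \<in># Q. low S \<le> low T) \<Longrightarrow> P (sol S) \<le> low S + \<Delta>
     \<Longrightarrow> bfs_step d k P low sol \<Delta> (Running Q xm) (Returned (sol S))"
| bfs_expand: "S \<in># Q \<Longrightarrow> (\<forall>T \<in># Q. low S \<le> low T) \<Longrightarrow> \<not> (P (sol S) \<le> low S + \<Delta>)
     \<Longrightarrow> distinct ts \<Longrightarrow> set ts = children d k S
     \<Longrightarrow> proc_children P low sol ts (Q - {#S#}) xm Q' xm'
     \<Longrightarrow> bfs_step d k P low sol \<Delta> (Running Q xm) (Running Q' xm')"

end

theory Submission
  imports Defs "HOL-Library.Multiset_Order"
begin

text \<open>
  Termination: expanding a node S replaces it in the queue by children, each of cardinality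
  |S| + 1 \<le> k, so the multiset of the numbers k - |S| over the queue decreases in the
  multiset order, which is well-founded.

  Correctness: fix G \<in> V* whose solution is certified, P(sol G) \<le> low G + \<Delta>. Every ancestor A
  of G satisfies low A \<le> F(A) \<le> P(x*) \<le> P_min, so it is never pruned. Hence the queue always
  contains an ancestor of G: when that ancestor is expanded it is not G (G would have been
  returned), and the child on the path to G is pushed. In particular the queue is never empty,
  so the search can only stop by returning some sol S, and since S has minimal key,
  P(sol S) \<le> low S + \<Delta> \<le> low A + \<Delta> \<le> P(x*) + \<Delta>.
\<close>

lemma proc_children_pushed:
  "proc_children P low sol ts Q xm Q' xm' \<Longrightarrow> \<exists>M. Q' = Q + M \<and> set_mset M \<subseteq> set ts"
proof (induction rule: proc_children.induct)
  case (pc_nil Q xm)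
  show ?case by (intro exI[of _ "{#}"]) auto
next
  case (pc_prune T xm ts Q Q' xm')
  then show ?case by auto
next
  case (pc_push ts T Q xm Q' xm')
  then obtain M where "Q' = add_mset T Q + M" "set_mset M \<subseteq> set ts" by auto
  then show ?case by (intro exI[of _ "add_mset T M"]) auto
qed

lemma proc_children_pushes_low_children:
  assumes "proc_children P low sol ts Q xm Q' xm'"
    and "\<forall>T\<in>set ts. c \<le> P (sol T)" and "c \<le> P xm"
  shows "c \<le> P xm' \<and> (\<forall>T\<in>set ts. low T \<le> c \<longrightarrow> T \<in># Q')"
  using assms
proof (induction rule: proc_children.induct)
  case (pc_nil Q xm)
  then show ?case by auto
next
  case (pc_prune T xm ts Q Q' xm')
  then show ?case by auto
next
  case (pc_push ts T Q xm Q' xm')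
  have "T \<in># Q'"
    using proc_children_pushed[OF pc_push.hyps] by auto
  with pc_push show ?case by auto
qed

lemma proc_children_exists: "\<exists>Q' xm'. proc_children P low sol ts Q xm Q' xm'"
proof (induction ts arbitrary: Q xm)
  case Nil
  then show ?case by (auto intro: pc_nil)
next
  case (Cons T ts)
  then show ?case by (meson pc_push)
qed

lemma finite_Vset: "finite (Vset d k)"
  by (rule finite_subset[of _ "Pow {1..d}"]) (auto simp: Vset_def)

lemma finite_children: "finite (children d k S)"
  by (rule finite_subset[OF _ finite_Vset]) (auto simp: children_def Eset_def)

lemma empty_in_Vset: "k \<le> d \<Longrightarrow> {} \<in> Vset d k"
  by (simp add: Vset_def max0_def)

lemma child_in_Vset: "T \<in> children d k S \<Longrightarrow> T \<in> Vset d k"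
  by (simp add: children_def Eset_def)

lemma card_child:
  assumes "T \<in> children d k S"
  shows "card T = Suc (card S)"
proof -
  have T: "T \<in> Vset d k" "T \<noteq> {}" "S = T - {Max T}"
    using assms by (auto simp: children_def Eset_def)
  then have "finite T"
    by (auto simp: Vset_def intro: finite_subset)
  with T show ?thesis
    by (metis Max_in card_Suc_Diff1)
qed

lemma desc_trans: "T \<in> desc d k S \<Longrightarrow> U \<in> desc d k T \<Longrightarrow> U \<in> desc d k S"
  by (simp add: desc_def)

lemma desc_through_child:
  assumes "G \<in> desc d k S" and "G \<noteq> S"
  obtains T where "T \<in> children d k S" and "G \<in> desc d k T"
  using assms by (auto simp: desc_def children_def elim: converse_rtranclE)

lemma parent_in_Vset:
  assumes S: "S \<in> Vset d k" and "S \<noteq> {}"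
  shows "S - {Max S} \<in> Vset d k"
proof -
  define S' where "S' = S - {Max S}"
  have fin: "finite S" using S by (auto simp: Vset_def intro: finite_subset)
  have mx: "Max S \<in> S" using fin \<open>S \<noteq> {}\<close> by simp
  have card: "card S = Suc (card S')" using fin mx unfolding S'_def by (metis card_Suc_Diff1)
  have sub: "S \<subseteq> {1..d}" and kS: "k - card S \<le> d - Max S"
    using S \<open>S \<noteq> {}\<close> by (auto simp: Vset_def max0_def)
  have "Max S \<le> d" "1 \<le> Max S" using mx sub by auto
  moreover have "max0 S' < Max S"
  proof (cases "S' = {}")
    case False
    moreover have "finite S'" using fin by (simp add: S'_def)
    ultimately have "Max S' \<in> S'" by simp
    then have "Max S' \<in> S" "Max S' \<noteq> Max S" by (auto simp: S'_def)
    then have "Max S' < Max S" using fin by (simp add: order_le_neq_trans)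
    then show ?thesis using False by (simp add: max0_def)
  qed (use \<open>1 \<le> Max S\<close> in \<open>simp add: max0_def\<close>)
  ultimately have "k - card S' \<le> d - max0 S'" using kS card by linarith
  then show ?thesis using S sub card by (auto simp: Vset_def S'_def)
qed

lemma Vset_in_desc_empty: "S \<in> Vset d k \<Longrightarrow> S \<in> desc d k {}"
proof (induction "card S" arbitrary: S)
  case 0
  then have "finite S" by (auto simp: Vset_def intro: finite_subset)
  with 0 have "S = {}" by simp
  then show ?case by (simp add: desc_def)
next
  case (Suc n)
  then have "S \<noteq> {}" by auto
  define S' where "S' = S - {Max S}"
  have S': "S' \<in> Vset d k" using parent_in_Vset[OF Suc.prems \<open>S \<noteq> {}\<close>] by (simp add: S'_def)
  have "S \<in> children d k S'" using S' Suc.prems \<open>S \<noteq> {}\<close> by (simp add: children_def Eset_def S'_def)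
  then have "card S' = n" using card_child Suc.hyps(2) by fastforce
  then have "S' \<in> desc d k {}" using Suc.hyps(1) S' by simp
  with \<open>S \<in> children d k S'\<close> show ?case by (auto simp: desc_def children_def)
qed

lemma Fval_le_of_desc:
  assumes "x \<in> Uset d k T" and "T \<in> desc d k S"
  shows "Fval d k P S \<le> ereal (P x)"
proof -
  have "x \<in> Uset d k S" using assms by (auto simp: Uset_def intro: desc_trans)
  then show ?thesis unfolding Fval_def by (rule INF_lower)
qed

definition queue_measure :: "nat \<Rightarrow> bfs_state \<Rightarrow> nat multiset" where
  "queue_measure k s =
     (case s of Running Q xm \<Rightarrow> image_mset (\<lambda>S. k - card S) Q | Returned x \<Rightarrow> {#})"

lemma bfs_step_decreases_queue_measure:
  assumes "bfs_step d k P low sol \<Delta> s (Running Q' xm')"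
  shows "queue_measure k (Running Q' xm') < queue_measure k s"
  using assms
proof cases
  case (bfs_expand S Q ts xm)
  let ?f = "\<lambda>S. k - card S"
  obtain M where M: "Q' = (Q - {#S#}) + M" "set_mset M \<subseteq> children d k S"
    using proc_children_pushed[OF bfs_expand(7)] bfs_expand(6) by auto
  have "?f T < ?f S" if "T \<in># M" for T
  proof -
    have "T \<in> children d k S" using that M(2) by auto
    then have "card T = Suc (card S)" "card T \<le> k"
      using card_child child_in_Vset by (auto simp: Vset_def)
    then show ?thesis by simp
  qed
  then have "image_mset ?f M < {#?f S#}" by auto
  then have "image_mset ?f (Q - {#S#}) + image_mset ?f M < image_mset ?f (Q - {#S#}) + {#?f S#}"
    by simp
  moreover have "image_mset ?f Q = image_mset ?f (Q - {#S#}) + {#?f S#}"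
  proof -
    have "image_mset ?f Q = image_mset ?f (add_mset S (Q - {#S#}))"
      using bfs_expand(2) by simp
    then show ?thesis by simp
  qed
  ultimately show ?thesis using bfs_expand(1) M(1) by (simp add: queue_measure_def)
qed

lemma bfs_step_no_infinite_run: "\<nexists>f. \<forall>n. bfs_step d k P low sol \<Delta> (f n) (f (Suc n))"
proof
  assume "\<exists>f. \<forall>n. bfs_step d k P low sol \<Delta> (f n) (f (Suc n))"
  then obtain f where f: "\<And>n. bfs_step d k P low sol \<Delta> (f n) (f (Suc n))" by blast
  have running: "\<exists>Q xm. f n = Running Q xm" for n
    using f[of n] by (auto elim: bfs_step.cases)
  have "queue_measure k (f (Suc n)) < queue_measure k (f n)" for n
    using f[of n] running[of "Suc n"] bfs_step_decreases_queue_measure by auto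
  then show False
    using wf_no_infinite_down_chainE[OF wf_less_multiset, of "\<lambda>n. queue_measure k (f n)"] by auto
qed

lemma bfs_step_from_nonempty_queue:
  assumes "Q \<noteq> {#}"
  shows "\<exists>s'. bfs_step d k P low sol \<Delta> (Running Q xm) s'"
proof -
  have "Min (low ` set_mset Q) \<in> low ` set_mset Q" using assms by simp
  then obtain S where "S \<in># Q" and "low S = Min (low ` set_mset Q)" by (metis imageE)
  then have S: "S \<in># Q" "\<forall>T\<in>#Q. low S \<le> low T" by auto
  show ?thesis
  proof (cases "P (sol S) \<le> low S + \<Delta>")
    case True
    then show ?thesis using S by (blast intro: bfs_return)
  next
    case False
    obtain ts where ts: "set ts = children d k S" "distinct ts"
      using finite_distinct_list[OF finite_children] by blast
    obtain Q' xm' where "proc_children P low sol ts (Q - {#S#}) xm Q' xm'"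
      using proc_children_exists by blast
    then show ?thesis using S False ts by (blast intro: bfs_expand)
  qed
qed

locale certified_target =
  fixes d k :: nat and P :: "(nat \<Rightarrow> real) \<Rightarrow> real"
    and low :: "nat set \<Rightarrow> real" and sol :: "nat set \<Rightarrow> (nat \<Rightarrow> real)" and \<Delta> :: real
    and c :: real and G :: "nat set"
  assumes target_in_Vset: "G \<in> Vset d k"
    and target_certified: "P (sol G) \<le> low G + \<Delta>"
    and sol_ge: "S \<in> Vset d k \<Longrightarrow> c \<le> P (sol S)"
    and low_ancestor_le: "A \<in> Vset d k \<Longrightarrow> G \<in> desc d k A \<Longrightarrow> low A \<le> c"
begin

abbreviation step :: "bfs_state \<Rightarrow> bfs_state \<Rightarrow> bool" where
  "step \<equiv> bfs_step d k P low sol \<Delta>"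

definition invariant :: "bfs_state \<Rightarrow> bool" where
  "invariant s = (case s of
      Running Q xm \<Rightarrow> set_mset Q \<subseteq> Vset d k \<and> c \<le> P xm \<and> (\<exists>A\<in>#Q. G \<in> desc d k A)
    | Returned x \<Rightarrow> x \<in> sol ` Vset d k \<and> P x \<le> c + \<Delta>)"

lemma invariant_initial:
  assumes "k \<le> d"
  shows "invariant (Running {#{}#} (sol {}))"
  using empty_in_Vset[OF assms] sol_ge Vset_in_desc_empty[OF target_in_Vset]
  by (simp add: invariant_def)

lemma invariant_step:
  assumes "step s s'" and "invariant s"
  shows "invariant s'"
  using assms
proof cases
  case (bfs_return S Q xm)
  then obtain A where A: "A \<in># Q" "G \<in> desc d k A" and Q: "set_mset Q \<subseteq> Vset d k"
    using assms(2) by (auto simp: invariant_def)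
  have "low S \<le> low A" using bfs_return A by auto
  also have "\<dots> \<le> c" using low_ancestor_le A Q by auto
  finally show ?thesis using bfs_return Q by (auto simp: invariant_def)
next
  case (bfs_expand S Q ts xm Q' xm')
  have Q: "set_mset Q \<subseteq> Vset d k" and xm: "c \<le> P xm"
    and "\<exists>A\<in>#Q. G \<in> desc d k A"
    using bfs_expand(1) assms(2) by (auto simp: invariant_def)
  then obtain A where A: "A \<in># Q" "G \<in> desc d k A" by blast
  have ts: "T \<in> Vset d k" if "T \<in> set ts" for T using that bfs_expand(7) child_in_Vset by blast
  obtain M where M: "Q' = (Q - {#S#}) + M" "set_mset M \<subseteq> set ts"
    using proc_children_pushed[OF bfs_expand(8)] by auto
  have pushed: "c \<le> P xm'" "\<And>T. T \<in> set ts \<Longrightarrow> low T \<le> c \<Longrightarrow> T \<in># Q'"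
    using proc_children_pushes_low_children[OF bfs_expand(8)] ts sol_ge xm by auto
  have "set_mset Q' \<subseteq> Vset d k" using M ts Q by (auto dest: in_diffD)
  moreover have "\<exists>A'\<in>#Q'. G \<in> desc d k A'"
  proof (cases "A = S")
    case False
    then show ?thesis using A M(1) by (auto simp: in_diff_count)
  next
    case True
    then have "G \<noteq> A" using bfs_expand(5) target_certified by auto
    then obtain T where T: "T \<in> children d k A" "G \<in> desc d k T"
      using A(2) desc_through_child by blast
    then have "T \<in> set ts" using True bfs_expand(7) by simp
    then have "T \<in># Q'" using pushed(2) low_ancestor_le ts T(2) by blast
    with T(2) show ?thesis by blast
  qed
  ultimately show ?thesis using bfs_expand(2) pushed(1) by (simp add: invariant_def)
qed

lemma invariant_reachable:
  assumes "k \<le> d" and "step\<^sup>*\<^sup>* (Running {#{}#} (sol {})) s"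
  shows "invariant s"
  using assms(2) by induction (auto intro: invariant_initial[OF assms(1)] invariant_step)

lemma stuck_reachable_state_is_Returned:
  assumes "k \<le> d" and "step\<^sup>*\<^sup>* (Running {#{}#} (sol {})) s" and "\<nexists>s'. step s s'"
  shows "\<exists>x. s = Returned x"
proof (cases s)
  case (Running Q xm)
  then have "Q \<noteq> {#}" using invariant_reachable[OF assms(1,2)] by (auto simp: invariant_def)
  then show ?thesis using bfs_step_from_nonempty_queue Running assms(3) by blast
qed simp

end

theorem theorem1:
  fixes d k :: nat and P :: "(nat \<Rightarrow> real) \<Rightarrow> real" and xs :: "nat \<Rightarrow> real"
    and low :: "nat set \<Rightarrow> real" and sol :: "nat set \<Rightarrow> (nat \<Rightarrow> real)" and \<Delta> :: real
  assumes "1 \<le> k" and "k \<le> d"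
    and "xs \<in> Rd d" and "norm0 xs \<le> k"
    and "\<forall>x \<in> Rd d. norm0 x \<le> k \<longrightarrow> P xs \<le> P x"
    and "\<Delta> > 0"
    and "\<forall>S \<in> Vset d k. sol S \<in> Rd d \<and> norm0 (sol S) \<le> k"
    and "\<forall>S \<in> Vset d k. ereal (low S) \<le> Fval d k P S"
    and "\<exists>S \<in> Vstar d k xs. P (sol S) \<le> low S + \<Delta>"
  shows "(\<not> (\<exists>f. f 0 = Running {#{}#} (sol {}) \<and> (\<forall>n. bfs_step d k P low sol \<Delta> (f n) (f (Suc n)))))
       \<and> (\<forall>s. (bfs_step d k P low sol \<Delta>)\<^sup>*\<^sup>* (Running {#{}#} (sol {})) s
           \<longrightarrow> (\<nexists>s'. bfs_step d k P low sol \<Delta> s s') \<longrightarrow> (\<exists>x. s = Returned x))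
       \<and> (\<forall>x. (bfs_step d k P low sol \<Delta>)\<^sup>*\<^sup>* (Running {#{}#} (sol {})) (Returned x)
           \<longrightarrow> norm0 x \<le> k \<and> P x \<le> P xs + \<Delta>)"
proof -
  obtain G where G: "G \<in> Vstar d k xs" "P (sol G) \<le> low G + \<Delta>" using assms(9) by blast
  have "low A \<le> P xs" if "A \<in> Vset d k" "G \<in> desc d k A" for A
  proof -
    have "xs \<in> Uset d k G" using G(1) by (simp add: Vstar_def)
    then have "Fval d k P A \<le> ereal (P xs)" using that(2) by (rule Fval_le_of_desc)
    then show ?thesis using assms(8) that(1) by (meson ereal_less_eq(3) order_trans)
  qed
  then interpret certified_target d k P low sol \<Delta> "P xs" G
    using G assms(5,7) by unfold_locales (auto simp: Vstar_def)
  show ?thesis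
    using bfs_step_no_infinite_run stuck_reachable_state_is_Returned[OF assms(2)]
      invariant_reachable[OF assms(2)] assms(7)
    by (fastforce simp: invariant_def)
qed

end
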